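(* Let $G$ be the Delaunay graph of a unit intensity Poisson process on $\mathbb{R}^2$, with edges drawn as straight segments between their endpoints, and let $\rho,\ell>0$. The probability that $G$ has an edge of length at least $\ell$ which intersects the square $Q(0,\rho)$ is at most $\left(\frac{\sqrt{32}\,\rho}{\ell}+8\right)^2 e^{-\ell^2/32}$.
   Context: $Q(x,R)=x+[-R,R]^2$. The Voronoi cell of $x\in V$ is $C(x)=\{z: d(z,x)=d(z,V)\}$; the Delaunay graph has vertex set $V$ and an edge $(x,y)$ iff $|C(x)\cap C(y)|>1$. *)

theory Defs
  imports "HOL-Probability.Probability"
begin

type_synonym point = "real ^ 2"

definition unit_poisson_process :: "'w measure \<Rightarrow> ('w \<Rightarrow> point set) \<Rightarrow> bool" where
  "unit_poisson_process M V \<longleftrightarrow>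
     prob_space M \<and>
     (\<forall>\<omega>\<in>space M. \<forall>A. bounded A \<longrightarrow> finite (V \<omega> \<inter> A)) \<and>
     (\<forall>A. A \<in> sets borel \<and> bounded A \<longrightarrow>
        (\<lambda>\<omega>. card (V \<omega> \<inter> A)) \<in> measurable M (count_space UNIV) \<and>
        (\<forall>n::nat. measure M {\<omega> \<in> space M. card (V \<omega> \<inter> A) = n}
                  = measure lborel A ^ n / fact n * exp (- measure lborel A))) \<and>
     (\<forall>(I::nat set) A. finite I \<longrightarrow>
        (\<forall>i\<in>I. A i \<in> sets borel \<and> bounded (A i)) \<longrightarrow>
        disjoint_family_on A I \<longrightarrow>
        prob_space.indep_vars M (\<lambda>_. count_space UNIV) (\<lambda>i \<omega>. card (V \<omega> \<inter> A i)) I)"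

definition square :: "point \<Rightarrow> real \<Rightarrow> point set" where
  "square x R = {z. \<forall>i. \<bar>z $ i - x $ i\<bar> \<le> R}"

definition voronoi_cell :: "point set \<Rightarrow> point \<Rightarrow> point set" where
  "voronoi_cell V x = {z. dist z x = infdist z V}"

definition delaunay_edge :: "point set \<Rightarrow> point \<Rightarrow> point \<Rightarrow> bool" where
  "delaunay_edge V x y \<longleftrightarrow> x \<in> V \<and> y \<in> V \<and> x \<noteq> y \<and>
     (\<exists>a b. a \<noteq> b \<and> a \<in> voronoi_cell V x \<inter> voronoi_cell V y \<and>
                     b \<in> voronoi_cell V x \<inter> voronoi_cell V y)"

end

theory Submission
  imports Defs
begin

text \<open>A long Delaunay edge lies in the closure of an empty disc of radius at least
  half its length, namely the disc around a common point of the two Voronoi cells.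
  Every point p of the edge therefore has an empty disc of radius l/2 within
  distance l/2, and such a disc contains a whole cell of the grid of side l/\<surd>8
  indexed by the floor of its centre. Only (\<surd>32 r/l + 8)^2 grid cells can arise
  for p in Q(0,r), and each is empty with probability exp(-l^2/8).\<close>

lemma voronoi_cell_empty_ball:
  assumes "a \<in> voronoi_cell W x"
  shows "W \<inter> ball a (dist a x) = {}"
  using assms infdist_le[of _ W a] by (force simp: voronoi_cell_def dist_commute)

lemma ball_shrink_towards:
  fixes a p :: "'a::real_normed_vector"
  assumes "dist a p \<le> R" and "0 < \<rho>" and "\<rho> \<le> R"
  obtains c where "dist c p \<le> \<rho>" and "ball c \<rho> \<subseteq> ball a R"
proof
  define t where "t = \<rho> / R"
  have t: "0 < t" "t \<le> 1" using assms by (auto simp: t_def)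
  define c where "c = p + t *\<^sub>R (a - p)"
  have "dist c p = t * dist a p"
    using t by (simp add: c_def dist_norm)
  also have "\<dots> \<le> t * R" using assms(1) t by simp
  finally show "dist c p \<le> \<rho>" using assms by (simp add: t_def)
  have "c - a = (1 - t) *\<^sub>R (p - a)" by (simp add: c_def algebra_simps)
  hence "dist c a = (1 - t) * dist a p" using t by (simp add: dist_norm norm_minus_commute)
  also have "\<dots> \<le> (1 - t) * R" using assms(1) t by (intro mult_left_mono) auto
  finally have "dist c a \<le> R - \<rho>" using assms by (simp add: t_def algebra_simps)
  show "ball c \<rho> \<subseteq> ball a R"
  proof
    fix z assume "z \<in> ball c \<rho>"
    moreover have "dist a z \<le> dist a c + dist c z" by (rule dist_triangle)
    ultimately show "z \<in> ball a R" using \<open>dist c a \<le> R - \<rho>\<close> by (simp add: dist_commute)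
  qed
qed

lemma delaunay_edge_empty_ball_near:
  assumes "delaunay_edge W x y" and "dist x y \<ge> l" and "l > 0"
    and "p \<in> closed_segment x y"
  obtains c where "dist c p \<le> l/2" and "W \<inter> ball c (l/2) = {}"
proof -
  obtain a where a: "a \<in> voronoi_cell W x" "a \<in> voronoi_cell W y"
    using assms(1) unfolding delaunay_edge_def by blast
  have "dist a y = dist a x"
    using a by (simp add: voronoi_cell_def)
  moreover have "dist x y \<le> dist a x + dist a y" by (rule dist_triangle3)
  moreover have "closed_segment x y \<subseteq> cball a (dist a x)"
    using \<open>dist a y = dist a x\<close> by (intro closed_segment_subset) auto
  ultimately have "dist a p \<le> dist a x" and "l/2 \<le> dist a x"
    using assms(2,4) by auto
  then obtain c where "dist c p \<le> l/2" and "ball c (l/2) \<subseteq> ball a (dist a x)"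
    using ball_shrink_towards assms(3) by (metis half_gt_zero)
  thus thesis using that voronoi_cell_empty_ball[OF a(1)] by blast
qed

definition grid_cell :: "real \<Rightarrow> ('n::finite \<Rightarrow> int) \<Rightarrow> (real ^ 'n) set" where
  "grid_cell s g = box (\<chi> i. of_int (g i) * s) (\<chi> i. (of_int (g i) + 1) * s)"

lemma grid_cell_borel: "grid_cell s g \<in> sets borel"
  and bounded_grid_cell: "bounded (grid_cell s g)"
  by (simp_all add: grid_cell_def)

lemma measure_grid_cell:
  assumes "s > 0"
  shows "measure lborel (grid_cell s (g :: 'n::finite \<Rightarrow> int)) = s ^ CARD('n)"
proof -
  let ?a = "(\<chi> i. of_int (g i) * s) :: real ^ 'n"
  let ?b = "(\<chi> i. (of_int (g i) + 1) * s) :: real ^ 'n"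
  have "?a \<in> cbox ?a ?b"
    using assms by (simp add: mem_box_cart)
  hence "cbox ?a ?b \<noteq> {}" by blast
  have "measure lborel (grid_cell s g) = measure lborel (cbox ?a ?b)"
    by (simp only: grid_cell_def measure_lborel_box_eq measure_lborel_cbox_eq)
  also have "\<dots> = (\<Prod>i\<in>UNIV. ?b $ i - ?a $ i)"
    using \<open>cbox ?a ?b \<noteq> {}\<close> by (rule content_cbox_cart)
  finally show ?thesis by (simp add: algebra_simps)
qed

lemma grid_cell_floor_subset_ball:
  fixes c :: "real ^ 'n" and s \<rho> :: real
  assumes "s > 0" and "\<rho> \<ge> 0" and "CARD('n) * s\<^sup>2 \<le> \<rho>\<^sup>2"
  shows "grid_cell s (\<lambda>i. \<lfloor>c $ i / s\<rfloor>) \<subseteq> ball c \<rho>"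
proof
  fix z assume z: "z \<in> grid_cell s (\<lambda>i. \<lfloor>c $ i / s\<rfloor>)"
  have coord: "\<bar>(z - c) $ i\<bar> < s" for i
  proof -
    have "of_int \<lfloor>c $ i / s\<rfloor> \<le> c $ i / s" "c $ i / s < of_int \<lfloor>c $ i / s\<rfloor> + 1"
      by linarith+
    hence "of_int \<lfloor>c $ i / s\<rfloor> * s \<le> c $ i" "c $ i < (of_int \<lfloor>c $ i / s\<rfloor> + 1) * s"
      using assms(1) by (meson pos_le_divide_eq pos_divide_less_eq)+
    moreover have "of_int \<lfloor>c $ i / s\<rfloor> * s < z $ i" "z $ i < (of_int \<lfloor>c $ i / s\<rfloor> + 1) * s"
      using z by (simp_all add: grid_cell_def mem_box_cart)
    ultimately show ?thesis by (simp add: algebra_simps abs_less_iff)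
  qed
  have "(norm (z - c))\<^sup>2 = (z - c) \<bullet> (z - c)" by (rule power2_norm_eq_inner)
  also have "\<dots> = (\<Sum>i\<in>UNIV. ((z - c) $ i)\<^sup>2)" by (simp add: inner_vec_def power2_eq_square)
  also have "\<dots> < (\<Sum>i\<in>(UNIV :: 'n set). s\<^sup>2)"
    using coord assms(1) by (intro sum_strict_mono) (auto simp: abs_le_square_iff[symmetric] not_le[symmetric])
  also have "\<dots> \<le> \<rho>\<^sup>2" using assms(3) by simp
  finally have "norm (z - c) < \<rho>" using assms(2) by (rule power2_less_imp_less)
  thus "z \<in> ball c \<rho>" by (simp add: dist_norm norm_minus_commute)
qed

lemma real_card_floor_interval_le:
  assumes "a \<le> b"
  shows "real (card {\<lfloor>a\<rfloor>..\<lfloor>b\<rfloor>}) \<le> b - a + 2"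
proof -
  have "\<lfloor>a\<rfloor> \<le> \<lfloor>b\<rfloor>" using assms by (rule floor_mono)
  hence "real (card {\<lfloor>a\<rfloor>..\<lfloor>b\<rfloor>}) = of_int \<lfloor>b\<rfloor> - of_int \<lfloor>a\<rfloor> + 1" by simp
  thus ?thesis by linarith
qed

lemma unit_poisson_process_void:
  assumes "unit_poisson_process M V" and "A \<in> sets borel" and "bounded A"
  shows "{\<omega> \<in> space M. V \<omega> \<inter> A = {}} \<in> sets M"
    and "measure M {\<omega> \<in> space M. V \<omega> \<inter> A = {}} = exp (- measure lborel A)"
proof -
  note P = assms(1)[unfolded unit_poisson_process_def]
  have void_eq: "{\<omega> \<in> space M. V \<omega> \<inter> A = {}} = (\<lambda>\<omega>. card (V \<omega> \<inter> A)) -` {0} \<inter> space M"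
    using P assms(3) by auto
  have "(\<lambda>\<omega>. card (V \<omega> \<inter> A)) \<in> measurable M (count_space UNIV)"
    using P assms(2,3) by blast
  thus "{\<omega> \<in> space M. V \<omega> \<inter> A = {}} \<in> sets M"
    unfolding void_eq by (rule measurable_sets) simp
  have "measure M {\<omega> \<in> space M. card (V \<omega> \<inter> A) = 0}
          = measure lborel A ^ 0 / fact 0 * exp (- measure lborel A)"
    using P assms(2,3) by blast
  also have "{\<omega> \<in> space M. card (V \<omega> \<inter> A) = 0} = {\<omega> \<in> space M. V \<omega> \<inter> A = {}}"
    using void_eq by auto
  finally show "measure M {\<omega> \<in> space M. V \<omega> \<inter> A = {}} = exp (- measure lborel A)"
    by simp
qed

lemma delaunay_long_edge_void_grid_cell:
  fixes s r :: real
  assumes "delaunay_edge W x y" and "dist x y \<ge> l" and "l > 0"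
    and "closed_segment x y \<inter> square 0 r \<noteq> {}"
    and "s > 0" and "2 * s\<^sup>2 \<le> (l/2)\<^sup>2"
  obtains g where "g \<in> UNIV \<rightarrow>\<^sub>E {\<lfloor>- (r + l/2) / s\<rfloor>..\<lfloor>(r + l/2) / s\<rfloor>}"
    and "W \<inter> grid_cell s g = {}"
proof -
  obtain p where p: "p \<in> closed_segment x y" "p \<in> square 0 r"
    using assms(4) by blast
  obtain c where c: "dist c p \<le> l/2" "W \<inter> ball c (l/2) = {}"
    using delaunay_edge_empty_ball_near[OF assms(1-3) p(1)] .
  define g where "g = (\<lambda>i. \<lfloor>c $ i / s\<rfloor>)"
  have "- (r + l/2) \<le> c $ i \<and> c $ i \<le> r + l/2" for i
  proof -
    have "\<bar>(c - p) $ i\<bar> \<le> norm (c - p)" by (rule component_le_norm_cart)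
    moreover have "\<bar>p $ i\<bar> \<le> r" using p(2) by (simp add: square_def)
    ultimately show ?thesis using c(1) by (auto simp: dist_norm)
  qed
  hence "g \<in> UNIV \<rightarrow>\<^sub>E {\<lfloor>- (r + l/2) / s\<rfloor>..\<lfloor>(r + l/2) / s\<rfloor>}"
    using assms(5) by (auto simp: g_def intro!: floor_mono divide_right_mono)
  moreover have "grid_cell s g \<subseteq> ball c (l/2)"
    unfolding g_def using assms(3,5,6) by (intro grid_cell_floor_subset_ball) auto
  ultimately show thesis using that c(2) by blast
qed

lemma card_grid_range_le:
  fixes r l :: real
  assumes "r > 0" and "l > 0"
  shows "real (card {\<lfloor>- (r + l/2) / (l / sqrt 8)\<rfloor>..\<lfloor>(r + l/2) / (l / sqrt 8)\<rfloor>})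
           \<le> sqrt 32 * r / l + 8"
proof -
  have sqrt32: "sqrt 32 = 2 * sqrt 8"
    using real_sqrt_mult[of 4 8] by simp
  have "sqrt 8 < (3::real)" by (rule real_less_lsqrt) auto
  have "0 \<le> (r + l/2) / (l / sqrt 8)" using assms by simp
  hence "- (r + l/2) / (l / sqrt 8) \<le> (r + l/2) / (l / sqrt 8)"
    unfolding minus_divide_left[symmetric] by linarith
  hence "real (card {\<lfloor>- (r + l/2) / (l / sqrt 8)\<rfloor>..\<lfloor>(r + l/2) / (l / sqrt 8)\<rfloor>})
           \<le> (r + l/2) / (l / sqrt 8) - - (r + l/2) / (l / sqrt 8) + 2"
    by (rule real_card_floor_interval_le)
  also have "\<dots> = sqrt 32 * r / l + sqrt 8 + 2"
    using assms by (simp add: sqrt32 field_simps)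
  finally show ?thesis using \<open>sqrt 8 < 3\<close> by linarith
qed

theorem lemma19:
  fixes M :: "'w measure" and V :: "'w \<Rightarrow> point set" and r l :: real
  assumes "unit_poisson_process M V" and "r > 0" and "l > 0"
  shows "\<exists>E \<in> sets M.
           {\<omega> \<in> space M. \<exists>x y. delaunay_edge (V \<omega>) x y \<and> dist x y \<ge> l \<and>
                               closed_segment x y \<inter> square 0 r \<noteq> {}} \<subseteq> E \<and>
           measure M E \<le> (sqrt 32 * r / l + 8)\<^sup>2 * exp (- l\<^sup>2 / 32)"
proof -
  define s where "s = l / sqrt 8"
  have s: "s > 0" "2 * s\<^sup>2 \<le> (l/2)\<^sup>2" "s\<^sup>2 = l\<^sup>2 / 8"
    using assms(3) by (simp_all add: s_def power_divide)
  define K where "K = {\<lfloor>- (r + l/2) / s\<rfloor>..\<lfloor>(r + l/2) / s\<rfloor>}"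
  define I where "I = (UNIV :: 2 set) \<rightarrow>\<^sub>E K"
  define void where "void g = {\<omega> \<in> space M. V \<omega> \<inter> grid_cell s g = {}}" for g
  note void_events = unit_poisson_process_void[OF assms(1) grid_cell_borel bounded_grid_cell]
  have "finite I" by (simp add: I_def K_def finite_PiE)
  hence event: "(\<Union>g\<in>I. void g) \<in> sets M" using void_events(1) by (auto simp: void_def)
  have cover: "{\<omega> \<in> space M. \<exists>x y. delaunay_edge (V \<omega>) x y \<and> dist x y \<ge> l \<and>
                               closed_segment x y \<inter> square 0 r \<noteq> {}} \<subseteq> (\<Union>g\<in>I. void g)"
  proof
    fix \<omega> assume "\<omega> \<in> {\<omega> \<in> space M. \<exists>x y. delaunay_edge (V \<omega>) x y \<and> dist x y \<ge> l \<and>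
                               closed_segment x y \<inter> square 0 r \<noteq> {}}"
    then obtain x y where \<omega>: "\<omega> \<in> space M" "delaunay_edge (V \<omega>) x y" "dist x y \<ge> l"
      "closed_segment x y \<inter> square 0 r \<noteq> {}" by blast
    obtain g where "g \<in> I" "V \<omega> \<inter> grid_cell s g = {}"
      using delaunay_long_edge_void_grid_cell[OF \<omega>(2,3) assms(3) \<omega>(4) s(1,2)]
      unfolding I_def K_def by blast
    thus "\<omega> \<in> (\<Union>g\<in>I. void g)" using \<omega>(1) by (auto simp: void_def)
  qed
  have "measure M (\<Union>g\<in>I. void g) \<le> (\<Sum>g\<in>I. measure M (void g))"
    using \<open>finite I\<close> void_events(1) by (intro measure_UNION_le) (auto simp: void_def)
  also have "\<dots> = real (card K) ^ 2 * exp (- l\<^sup>2 / 8)"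
    using void_events(2) by (simp add: void_def measure_grid_cell[OF s(1)] s(3) I_def card_PiE)
  also have "\<dots> \<le> (sqrt 32 * r / l + 8)\<^sup>2 * exp (- l\<^sup>2 / 32)"
    using card_grid_range_le[OF assms(2,3)] unfolding K_def s_def
    by (intro mult_mono power_mono) auto
  finally show ?thesis using event cover by blast
qed

end
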